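(* Let $r,s,k$ be integers with $1\le k\le\min\{r,s\}$, and let $F$ be a field with $|F|\ge k+2$. Then there exist $A\in F^{r\times r}$ and $B\in F^{s\times s}$ such that the linear code $C(A,B)$ has dimension $k$ and minimum distance $d=\lfloor r/k\rfloor s$.
   Context: $C(A,B):=\{X\in F^{r\times s}\mid AX=XB\}$, viewed as a linear code of length $rs$ by regarding each matrix as the vector of its $rs$ entries. The minimum (Hamming) distance of a subspace $C$ is $\min\{\text{number of nonzero entries of }w\mid w\in C,\ w\neq0\}$. *)

theory Defs
  imports "HOL-Analysis.Analysis"
begin

definition flatten :: "'a^'s^'r \<Rightarrow> 'a^('r \<times> 's)" where
  "flatten X = (\<chi> p. X $ fst p $ snd p)"

definition CAB :: "'a::field^'r^'r \<Rightarrow> 'a^'s^'s \<Rightarrow> ('a^('r \<times> 's)) set" where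
  "CAB A B = flatten ` {X :: 'a^'s^'r. A ** X = X ** B}"

definition hamming_weight :: "'a::zero^'n \<Rightarrow> nat" where
  "hamming_weight w = card {p. w $ p \<noteq> 0}"

definition min_distance :: "('a::zero^'n) set \<Rightarrow> nat" where
  "min_distance C = (INF w \<in> C - {0}. hamming_weight w)"

end

theory Submission imports Defs begin

(* If \<sigma> is an idempotent map of the rows and \<pi> a cyclic permutation of the columns, take
   A = (a_il) with a_il = 1 iff l = \<sigma> i, and B the transpose of the permutation matrix of \<pi>.
   Then AX = XB says X_{\<sigma> i, j} = X_{i, \<pi> j}. As \<pi> is a single cycle, every row of X is
   constant and row i equals row \<sigma> i, so C(A,B) consists of the words that are constant on the
   blocks \<sigma>^-1(c) \<times> columns: its dimension is the number of blocks and its minimum distance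
   the size of the smallest block. Cutting the r rows into k consecutive blocks of length
   floor(r/k), the last one absorbing the remainder, gives dimension k and distance floor(r/k) s.
   The construction works over every field. *)

definition fiber_constant_words :: "('n \<Rightarrow> 'b) \<Rightarrow> ('a::field^'n) set" where
  "fiber_constant_words \<phi> = range (\<lambda>y. \<chi> p. y (\<phi> p))"

definition fiber_indicator :: "('n \<Rightarrow> 'b) \<Rightarrow> 'b \<Rightarrow> 'a::field^'n" where
  "fiber_indicator \<phi> b = (\<chi> p. if \<phi> p = b then 1 else 0)"

lemma subspace_fiber_constant_words:
  "vec.subspace (fiber_constant_words \<phi> :: ('a::field^'n) set)"
  unfolding vec.subspace_def fiber_constant_words_def
proof (intro conjI ballI allI)
  show "0 \<in> range (\<lambda>y. \<chi> p. y (\<phi> p))"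
    by (rule image_eqI[where x = "\<lambda>_. 0"]) (auto simp: vec_eq_iff)
next
  fix v w :: "'a^'n" assume "v \<in> range (\<lambda>y. \<chi> p. y (\<phi> p))" "w \<in> range (\<lambda>y. \<chi> p. y (\<phi> p))"
  then obtain y z where "v = (\<chi> p. y (\<phi> p))" "w = (\<chi> p. z (\<phi> p))" by auto
  then show "v + w \<in> range (\<lambda>y. \<chi> p. y (\<phi> p))"
    by (intro image_eqI[where x = "\<lambda>b. y b + z b"]) (auto simp: vec_eq_iff)
next
  fix c :: 'a and w :: "'a^'n" assume "w \<in> range (\<lambda>y. \<chi> p. y (\<phi> p))"
  then obtain y where "w = (\<chi> p. y (\<phi> p))" by auto
  then show "c *s w \<in> range (\<lambda>y. \<chi> p. y (\<phi> p))"
    by (intro image_eqI[where x = "\<lambda>b. c * y b"]) (auto simp: vec_eq_iff)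
qed

lemma fiber_indicator_in_fiber_constant_words: "fiber_indicator \<phi> b \<in> fiber_constant_words \<phi>"
  unfolding fiber_indicator_def fiber_constant_words_def by auto

lemma fiber_indicator_at_representative:
  "fiber_indicator \<phi> b $ inv \<phi> c = (if b = c then 1 else 0)" if "c \<in> range \<phi>"
  using that by (simp add: fiber_indicator_def f_inv_into_f)

lemma fiber_constant_words_eq_span:
  fixes \<phi> :: "'n::finite \<Rightarrow> 'b"
  shows "fiber_constant_words \<phi> = vec.span (fiber_indicator \<phi> ` range \<phi> :: ('a::field^'n) set)"
proof
  show "vec.span (fiber_indicator \<phi> ` range \<phi>) \<subseteq> (fiber_constant_words \<phi> :: ('a^'n) set)"
    by (intro vec.span_minimal subspace_fiber_constant_words)
      (auto intro: fiber_indicator_in_fiber_constant_words)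
next
  show "(fiber_constant_words \<phi> :: ('a^'n) set) \<subseteq> vec.span (fiber_indicator \<phi> ` range \<phi>)"
  proof
    fix w :: "'a^'n" assume "w \<in> fiber_constant_words \<phi>"
    then obtain y where w: "w = (\<chi> p. y (\<phi> p))" by (auto simp: fiber_constant_words_def)
    have "w = (\<Sum>b\<in>range \<phi>. y b *s fiber_indicator \<phi> b)"
      by (simp add: w vec_eq_iff sum_component fiber_indicator_def if_distrib[of "times _"]
          eq_commute cong: if_cong)
    also have "\<dots> \<in> vec.span (fiber_indicator \<phi> ` range \<phi>)"
      by (intro vec.span_sum vec.span_scale vec.span_base) auto
    finally show "w \<in> vec.span (fiber_indicator \<phi> ` range \<phi>)" .
  qed
qed

lemma inj_on_fiber_indicator: "inj_on (fiber_indicator \<phi> :: 'b \<Rightarrow> 'a::field^'n) (range \<phi>)"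
proof (rule inj_onI)
  fix b c assume "b \<in> range \<phi>" "c \<in> range \<phi>"
    and "(fiber_indicator \<phi> b :: 'a^'n) = fiber_indicator \<phi> c"
  then show "b = c"
    using fiber_indicator_at_representative[of c \<phi> b] fiber_indicator_at_representative[of c \<phi> c]
    by (metis zero_neq_one)
qed

lemma independent_fiber_indicators:
  fixes \<phi> :: "'n::finite \<Rightarrow> 'b"
  shows "vec.independent (fiber_indicator \<phi> ` range \<phi> :: ('a::field^'n) set)"
proof (rule vec.independent_if_scalars_zero)
  fix c :: "'a^'n \<Rightarrow> 'a" and u :: "'a^'n"
  assume sum0: "(\<Sum>u\<in>fiber_indicator \<phi> ` range \<phi>. c u *s u) = 0"
    and "u \<in> fiber_indicator \<phi> ` range \<phi>"
  then obtain b where b: "b \<in> range \<phi>" "u = fiber_indicator \<phi> b" by auto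
  have "0 = (\<Sum>b'\<in>range \<phi>. c (fiber_indicator \<phi> b') *s fiber_indicator \<phi> b') $ inv \<phi> b"
    using sum0 by (simp add: sum.reindex[OF inj_on_fiber_indicator])
  also have "\<dots> = (\<Sum>b'\<in>range \<phi>. if b' = b then c (fiber_indicator \<phi> b') else 0)"
    using b(1) by (simp add: sum_component fiber_indicator_at_representative
        if_distrib[of "times _"] cong: if_cong)
  also have "\<dots> = c u" using b by simp
  finally show "c u = 0" by simp
qed simp

lemma dim_fiber_constant_words:
  fixes \<phi> :: "'n::finite \<Rightarrow> 'b"
  shows "vec.dim (fiber_constant_words \<phi> :: ('a::field^'n) set) = card (range \<phi>)"
  unfolding fiber_constant_words_eq_span
    vec.dim_span_eq_card_independent[OF independent_fiber_indicators]
  by (rule card_image[OF inj_on_fiber_indicator])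

lemma hamming_weight_fiber_indicator:
  "hamming_weight (fiber_indicator \<phi> b :: 'a::field^'n) = card (\<phi> -` {b})"
  unfolding hamming_weight_def fiber_indicator_def by (simp add: vimage_def)

lemma fiber_subset_support:
  assumes "w \<in> fiber_constant_words \<phi>" and "w $ p \<noteq> 0"
  shows "\<phi> -` {\<phi> p} \<subseteq> {p'. w $ p' \<noteq> 0}"
  using assms by (auto simp: fiber_constant_words_def)

lemma min_distance_fiber_constant_words:
  fixes \<phi> :: "'n::finite \<Rightarrow> 'b"
  shows "min_distance (fiber_constant_words \<phi> :: ('a::field^'n) set)
    = (MIN p. card (\<phi> -` {\<phi> p}))"
  unfolding min_distance_def
proof (rule cInf_eq_minimum)
  obtain p0 where p0: "card (\<phi> -` {\<phi> p0}) = (MIN p. card (\<phi> -` {\<phi> p}))"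
    using Min_in[of "range (\<lambda>p. card (\<phi> -` {\<phi> p}))"] by fastforce
  have "(fiber_indicator \<phi> (\<phi> p0) :: 'a^'n) $ p0 \<noteq> 0"
    by (simp add: fiber_indicator_def)
  then have "(fiber_indicator \<phi> (\<phi> p0) :: 'a^'n) \<in> fiber_constant_words \<phi> - {0}"
    using fiber_indicator_in_fiber_constant_words by fastforce
  then show "(MIN p. card (\<phi> -` {\<phi> p}))
      \<in> hamming_weight ` (fiber_constant_words \<phi> - {0} :: ('a^'n) set)"
    using hamming_weight_fiber_indicator p0 by (metis image_eqI)
next
  fix n assume "n \<in> hamming_weight ` (fiber_constant_words \<phi> - {0} :: ('a^'n) set)"
  then obtain w :: "'a^'n" where w: "w \<in> fiber_constant_words \<phi>" "w \<noteq> 0"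
    and n: "n = hamming_weight w" by auto
  obtain p where "w $ p \<noteq> 0" using w(2) by (auto simp: vec_eq_iff)
  then have "card (\<phi> -` {\<phi> p}) \<le> n"
    unfolding n hamming_weight_def by (intro card_mono fiber_subset_support w(1)) auto
  moreover have "(MIN p. card (\<phi> -` {\<phi> p})) \<le> card (\<phi> -` {\<phi> p})"
    by (rule Min_le) auto
  ultimately show "(MIN p. card (\<phi> -` {\<phi> p})) \<le> n" by linarith
qed

lemma range_comp_fst: "range (\<lambda>p :: 'r \<times> 's. \<beta> (fst p)) = range \<beta>"
  by (metis image_image range_fst)

lemma Min_card_fiber_comp_fst:
  fixes \<beta> :: "'r::finite \<Rightarrow> 'b"
  shows "(MIN p. card ((\<lambda>q :: 'r \<times> 's::finite. \<beta> (fst q)) -` {\<beta> (fst p)}))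
    = (MIN i. card (\<beta> -` {\<beta> i})) * CARD('s)"
proof -
  have fiber: "card ((\<lambda>q :: 'r \<times> 's. \<beta> (fst q)) -` {\<beta> (fst p)})
    = card (\<beta> -` {\<beta> (fst p)}) * CARD('s)" for p
  proof -
    have "(\<lambda>q :: 'r \<times> 's. \<beta> (fst q)) -` {\<beta> (fst p)} = \<beta> -` {\<beta> (fst p)} \<times> UNIV"
      by auto
    then show ?thesis by (simp add: card_cartesian_product)
  qed
  have "(MIN p. card ((\<lambda>q :: 'r \<times> 's. \<beta> (fst q)) -` {\<beta> (fst p)}))
      = Min ((\<lambda>c. c * CARD('s)) ` range (\<lambda>i. card (\<beta> -` {\<beta> i})))"
    unfolding fiber image_image
    by (rule arg_cong[where f = Min, OF range_comp_fst[of "\<lambda>i. card (\<beta> -` {\<beta> i}) * CARD('s)"]])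
  also have "\<dots> = (MIN i. card (\<beta> -` {\<beta> i})) * CARD('s)"
    by (rule mono_Min_commute[symmetric]) (auto simp: mono_def)
  finally show ?thesis .
qed

definition single_cycle :: "('a \<Rightarrow> 'a) \<Rightarrow> bool" where
  "single_cycle \<pi> \<longleftrightarrow> (\<forall>x y. \<exists>n. (\<pi> ^^ n) x = y)"

lemma single_cycle_surj:
  assumes "single_cycle \<pi>" shows "surj \<pi>"
  unfolding surj_def
proof
  fix y
  obtain n where "(\<pi> ^^ n) (\<pi> y) = y" using assms unfolding single_cycle_def by blast
  then show "\<exists>x. y = \<pi> x" by (metis funpow_swap1)
qed

lemma invariant_funpow: "(\<And>x. Z (\<pi> x) = Z x) \<Longrightarrow> Z ((\<pi> ^^ n) x) = Z x"
  by (induction n) simp_all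

lemma single_cycle_invariant_const:
  assumes "single_cycle \<pi>" and "\<And>x. Z (\<pi> x) = Z x"
  shows "Z x = Z y"
proof -
  obtain n where "(\<pi> ^^ n) x = y" using assms(1) unfolding single_cycle_def by blast
  then show ?thesis using invariant_funpow[of Z \<pi>, OF assms(2)] by metis
qed

lemma single_cycle_exists: "\<exists>\<pi> :: 'a::finite \<Rightarrow> 'a. single_cycle \<pi>"
proof -
  obtain h :: "'a \<Rightarrow> nat" where h: "bij_betw h UNIV {0..<CARD('a)}"
    using ex_bij_betw_finite_nat[of "UNIV :: 'a set"] by auto
  define \<pi> where "\<pi> x = inv h (Suc (h x) mod CARD('a))" for x
  have h_inv: "h (inv h n) = n" if "n < CARD('a)" for n
    using h that by (simp add: bij_betw_inv_into_right)
  have inv_h: "inv h (h x) = x" for x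
    using h by (simp add: bij_betw_imp_inj_on)
  have h_less: "h x < CARD('a)" for x
    using h by (auto simp: bij_betw_def)
  have iterate: "(\<pi> ^^ n) x = inv h ((h x + n) mod CARD('a))" for n x
    by (induction n) (simp_all add: inv_h \<pi>_def h_inv h_less mod_Suc_eq)
  have "(\<pi> ^^ (CARD('a) - h x + h y)) x = y" for x y
  proof -
    have "h x + (CARD('a) - h x + h y) = h y + CARD('a)" using h_less[of x] by simp
    then show ?thesis by (simp add: iterate inv_h h_less)
  qed
  then show ?thesis unfolding single_cycle_def by blast
qed

definition selection_matrix :: "('n \<Rightarrow> 'm) \<Rightarrow> 'a::semiring_1^'m^'n" where
  "selection_matrix \<sigma> = (\<chi> i l. if l = \<sigma> i then 1 else 0)"

lemma selection_matrix_mult: "(selection_matrix \<sigma> ** X) $ i $ j = X $ \<sigma> i $ j"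
  by (simp add: selection_matrix_def matrix_matrix_mult_def if_distrib[of "\<lambda>a. a * _"]
      cong: if_cong)

lemma mult_transpose_selection_matrix:
  "(X ** transpose (selection_matrix \<pi>)) $ i $ j = X $ i $ \<pi> j"
  by (simp add: selection_matrix_def transpose_def matrix_matrix_mult_def
      if_distrib[of "times _"] cong: if_cong)

lemma selection_intertwiner_iff:
  "selection_matrix \<sigma> ** X = X ** transpose (selection_matrix \<pi>)
    \<longleftrightarrow> (\<forall>i j. X $ \<sigma> i $ j = X $ i $ \<pi> j)"
  by (simp add: vec_eq_iff selection_matrix_mult mult_transpose_selection_matrix)

lemma CAB_selection_single_cycle:
  fixes \<sigma> :: "'r::finite \<Rightarrow> 'r" and \<pi> :: "'s::finite \<Rightarrow> 's"
  assumes idem: "\<And>i. \<sigma> (\<sigma> i) = \<sigma> i" and cycle: "single_cycle \<pi>"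
  shows "CAB (selection_matrix \<sigma> :: 'a::field^'r^'r) (transpose (selection_matrix \<pi>))
    = fiber_constant_words (\<lambda>p. \<sigma> (fst p))"
  unfolding CAB_def selection_intertwiner_iff fiber_constant_words_def
proof safe
  fix X :: "'a^'s^'r" assume X: "\<forall>i j. X $ \<sigma> i $ j = X $ i $ \<pi> j"
  have row: "X $ i $ j = X $ \<sigma> i $ j'" for i j j'
  proof -
    obtain j0 where j0: "j = \<pi> j0" using single_cycle_surj[OF cycle] by blast
    have "X $ \<sigma> i $ \<pi> j'' = X $ \<sigma> i $ j''" for j''
      using X[rule_format, of "\<sigma> i" j''] by (simp add: idem)
    then have "X $ \<sigma> i $ j0 = X $ \<sigma> i $ j'"
      by (rule single_cycle_invariant_const[OF cycle])
    then show ?thesis using X[rule_format, of i j0] j0 by simp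
  qed
  have "flatten X = (\<chi> p. X $ \<sigma> (fst p) $ undefined)"
    unfolding flatten_def vec_eq_iff vec_lambda_beta by (metis row)
  then show "flatten X \<in> range (\<lambda>y. \<chi> p. y (\<sigma> (fst p)))"
    by (intro image_eqI[where x = "\<lambda>i. X $ i $ undefined"]) simp_all
next
  fix y :: "'r \<Rightarrow> 'a"
  let ?X = "(\<chi> i j. y (\<sigma> i)) :: 'a^'s^'r"
  have "flatten ?X = (\<chi> p. y (\<sigma> (fst p)))" by (simp add: flatten_def)
  moreover have "\<forall>i j. ?X $ \<sigma> i $ j = ?X $ i $ \<pi> j" by (simp add: idem)
  ultimately show "(\<chi> p. y (\<sigma> (fst p))) \<in> flatten ` {X. \<forall>i j. X $ \<sigma> i $ j = X $ i $ \<pi> j}"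
    by (intro rev_image_eqI[of ?X]) simp_all
qed

lemma CAB_fiber_representatives:
  fixes \<beta> :: "'r::finite \<Rightarrow> 'b" and \<pi> :: "'s::finite \<Rightarrow> 's"
  assumes "single_cycle \<pi>"
  shows "CAB (selection_matrix (\<lambda>i. inv \<beta> (\<beta> i)) :: 'a::field^'r^'r) (transpose (selection_matrix \<pi>))
    = fiber_constant_words (\<lambda>p. \<beta> (fst p))"
proof -
  have \<beta>_inv: "\<beta> (inv \<beta> (\<beta> i)) = \<beta> i" for i by (simp add: f_inv_into_f)
  have "CAB (selection_matrix (\<lambda>i. inv \<beta> (\<beta> i)) :: 'a^'r^'r) (transpose (selection_matrix \<pi>))
      = fiber_constant_words (\<lambda>p. inv \<beta> (\<beta> (fst p)))"
    by (rule CAB_selection_single_cycle) (simp_all add: \<beta>_inv assms)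
  also have "\<dots> = fiber_constant_words (\<lambda>p. \<beta> (fst p))"
    unfolding fiber_constant_words_def
  proof (intro subset_antisym subsetI)
    fix w :: "'a^('r \<times> 's)" assume "w \<in> range (\<lambda>y. \<chi> p. y (inv \<beta> (\<beta> (fst p))))"
    then obtain y where "w = (\<chi> p. y (inv \<beta> (\<beta> (fst p))))" by blast
    then show "w \<in> range (\<lambda>z. \<chi> p. z (\<beta> (fst p)))"
      by (intro image_eqI[where x = "\<lambda>b. y (inv \<beta> b)"]) simp_all
  next
    fix w :: "'a^('r \<times> 's)" assume "w \<in> range (\<lambda>z. \<chi> p. z (\<beta> (fst p)))"
    then obtain z where "w = (\<chi> p. z (\<beta> (fst p)))" by blast
    then show "w \<in> range (\<lambda>y. \<chi> p. y (inv \<beta> (\<beta> (fst p))))"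
      by (intro image_eqI[where x = "\<lambda>i. z (\<beta> i)"]) (simp_all add: \<beta>_inv)
  qed
  finally show ?thesis .
qed

definition block_index :: "nat \<Rightarrow> nat \<Rightarrow> nat \<Rightarrow> nat" where
  "block_index r k n = min (n div (r div k)) (k - 1)"

lemma block_index_less: "1 \<le> k \<Longrightarrow> block_index r k n < k"
  by (simp add: block_index_def)

lemma block_index_image:
  assumes "1 \<le> k" "k \<le> r"
  shows "block_index r k ` {..<r} = {..<k}"
proof (intro subset_antisym subsetI)
  fix t assume t: "t \<in> {..<k}"
  have "0 < r div k" using assms by (simp add: div_greater_zero_iff)
  then have "r div k * t < r div k * k" using t by simp
  also have "\<dots> \<le> r" by simp
  finally have "r div k * t \<in> {..<r}" by simp
  moreover have "block_index r k (r div k * t) = t"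
    using t \<open>0 < r div k\<close> by (auto simp: block_index_def)
  ultimately show "t \<in> block_index r k ` {..<r}" by (metis image_eqI)
qed (use assms block_index_less in auto)

lemma block_contains_interval:
  assumes "1 \<le> k" "k \<le> r" "t < k"
  shows "{r div k * t..<r div k * t + r div k} \<subseteq> {n \<in> {..<r}. block_index r k n = t}"
proof
  fix n assume n: "n \<in> {r div k * t..<r div k * t + r div k}"
  have "r div k * t + r div k = r div k * Suc t" by simp
  also have "\<dots> \<le> r div k * k" using assms(3) by (intro mult_le_mono2) simp
  also have "\<dots> \<le> r" by simp
  finally have "n < r" using n by simp
  moreover have "n div (r div k) = t"
    using n by (intro div_nat_eqI) (auto simp: mult.commute)
  ultimately show "n \<in> {n \<in> {..<r}. block_index r k n = t}"
    using assms(3) by (simp add: block_index_def)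
qed

lemma card_block_ge:
  assumes "1 \<le> k" "k \<le> r" "t < k"
  shows "r div k \<le> card {n \<in> {..<r}. block_index r k n = t}"
  using card_mono[OF _ block_contains_interval[OF assms]] by simp

lemma card_first_block:
  assumes "1 \<le> k" "k \<le> r"
  shows "card {n \<in> {..<r}. block_index r k n = 0} = r div k"
proof -
  have "{n \<in> {..<r}. block_index r k n = 0} \<subseteq> {..<r div k}"
  proof
    fix n assume n: "n \<in> {n \<in> {..<r}. block_index r k n = 0}"
    show "n \<in> {..<r div k}"
    proof (cases "k = 1")
      case True then show ?thesis using n by simp
    next
      case False
      then have "n div (r div k) = 0" using n assms(1) by (auto simp: block_index_def min_def split: if_splits)
      moreover have "0 < r div k" using assms by (simp add: div_greater_zero_iff)
      ultimately show ?thesis by (metis div_eq_0_iff lessThan_iff not_gr0)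
    qed
  qed
  moreover have "{..<r div k} \<subseteq> {n \<in> {..<r}. block_index r k n = 0}"
    using block_contains_interval[OF assms, of 0] assms by (simp add: lessThan_atLeast0)
  ultimately show ?thesis by (metis card_lessThan subset_antisym)
qed

lemma block_labelling_exists:
  assumes "1 \<le> k" "k \<le> CARD('r)"
  obtains \<beta> :: "'r::finite \<Rightarrow> nat"
  where "range \<beta> = {..<k}" and "(MIN i. card (\<beta> -` {\<beta> i})) = CARD('r) div k"
proof -
  obtain g :: "'r \<Rightarrow> nat" where g: "bij_betw g UNIV {..<CARD('r)}"
    using ex_bij_betw_finite_nat[of "UNIV :: 'r set"] by (auto simp: lessThan_atLeast0)
  define \<beta> where "\<beta> i = block_index CARD('r) k (g i)" for i
  have range: "range \<beta> = {..<k}"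
    using block_index_image[OF assms] g unfolding \<beta>_def bij_betw_def by (metis image_image)
  have fiber: "card (\<beta> -` {t}) = card {n \<in> {..<CARD('r)}. block_index CARD('r) k n = t}" for t
  proof -
    have "\<beta> -` {t} = g -` {n \<in> {..<CARD('r)}. block_index CARD('r) k n = t}"
      using g by (auto simp: \<beta>_def bij_betw_def)
    moreover have "card (g -` {n \<in> {..<CARD('r)}. block_index CARD('r) k n = t})
        = card {n \<in> {..<CARD('r)}. block_index CARD('r) k n = t}"
      by (rule card_vimage_inj) (use g in \<open>auto simp: bij_betw_def\<close>)
    ultimately show ?thesis by (simp only:)
  qed
  have "(MIN i. card (\<beta> -` {\<beta> i})) = CARD('r) div k"
  proof (rule Min_eqI)
    fix c assume "c \<in> range (\<lambda>i. card (\<beta> -` {\<beta> i}))"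
    then obtain i where c: "c = card (\<beta> -` {\<beta> i})" by blast
    have "\<beta> i < k" using range by auto
    then have "CARD('r) div k \<le> card {n \<in> {..<CARD('r)}. block_index CARD('r) k n = \<beta> i}"
      by (rule card_block_ge[OF assms])
    then show "CARD('r) div k \<le> c" unfolding c fiber .
  next
    have "0 \<in> range \<beta>" using range assms(1) by simp
    then obtain i where i: "\<beta> i = 0" by (metis rangeE)
    have "card (\<beta> -` {\<beta> i}) = CARD('r) div k"
      unfolding i fiber by (rule card_first_block[OF assms])
    then show "CARD('r) div k \<in> range (\<lambda>i. card (\<beta> -` {\<beta> i}))"
      by (rule range_eqI[OF sym])
  qed simp
  with range show thesis by (rule that)
qed

theorem theorem4p3:
  fixes k :: nat
  assumes "1 \<le> k" and "k \<le> min CARD('r::finite) CARD('s::finite)"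
    and "infinite (UNIV :: 'a::field set) \<or> k + 2 \<le> CARD('a)"
  shows "\<exists>(A :: 'a^'r^'r) (B :: 'a^'s^'s).
           vec.dim (CAB A B) = k \<and>
           min_distance (CAB A B) = (CARD('r) div k) * CARD('s)"
proof -
  obtain \<beta> :: "'r \<Rightarrow> nat" where range: "range \<beta> = {..<k}"
    and min_fiber: "(MIN i. card (\<beta> -` {\<beta> i})) = CARD('r) div k"
    using block_labelling_exists[of k] assms(1,2) by auto
  obtain \<pi> :: "'s \<Rightarrow> 's" where "single_cycle \<pi>" using single_cycle_exists by blast
  then have code: "CAB (selection_matrix (\<lambda>i. inv \<beta> (\<beta> i)) :: 'a^'r^'r) (transpose (selection_matrix \<pi>))
      = fiber_constant_words (\<lambda>p. \<beta> (fst p))"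
    by (rule CAB_fiber_representatives)
  have dim: "vec.dim (fiber_constant_words (\<lambda>p :: 'r \<times> 's. \<beta> (fst p)) :: ('a^('r \<times> 's)) set) = k"
    by (simp add: dim_fiber_constant_words range_comp_fst range)
  have min: "min_distance (fiber_constant_words (\<lambda>p :: 'r \<times> 's. \<beta> (fst p)) :: ('a^('r \<times> 's)) set)
      = CARD('r) div k * CARD('s)"
    by (simp add: min_distance_fiber_constant_words Min_card_fiber_comp_fst min_fiber)
  show ?thesis using dim min unfolding code[symmetric] by blast
qed

end
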